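(* Let a program execution be a finite sequence of heaps $h_0,h_1,\dots,h_n$, where $h_0$ is the initial heap in which the only allocated object is the special object $\mathit{Void}$, which is open ($\mathit{Void}.\mathit{closed}=\mathit{False}$), and each $h_{i+1}$ is obtained from $h_i$ by one elementary step: either allocating a fresh object (with some initial attribute values), or updating a single attribute $x.a$ of an allocated object $x$ to a new value. Consider a verification methodology $M$ whose proof obligations guarantee, for every step of every execution of a program that satisfies them: (a) every freshly allocated object is open (its $\mathit{closed}$ attribute is $\mathit{False}$); (b) whenever $x.\mathit{owner}$ is updated or $x.\mathit{closed}$ is set to $\mathit{False}$, the object $x$ is free in the state before the step (i.e. $x.\mathit{owner}.\mathit{closed}=\mathit{False}$); (c) whenever $x.\mathit{closed}$ is updated to $\mathit{True}$, every object $o\in x.\mathit{owns}$ satisfies $o.\mathit{closed}=\mathit{True}$ and $o.\mathit{owner}=x$ in the state before the step; (d) whenever an attribute $x.a$ with $a\notin\{\mathit{closed},\mathit{owner}\}$ is updated, $x$ is open in the state before the step. Then every program that satisfies $M$'s proof obligations satisfies, in every heap of every execution, the property $$\forall o,p:\ p.\mathit{closed}\wedge o\in p.\mathit{owns}\ \Rightarrow\ o.\mathit{closed}\wedge o.\mathit{owner}=p \qquad \text{(G2)}$$ (quantifying over allocated objects).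
   Context: Every object has built-in (ghost) attributes: $\mathit{closed}$ (Boolean, encoding consistency), $\mathit{owner}$ (an object) and $\mathit{owns}$ (a set of objects). An object $o$ is open if $o.\mathit{closed}=\mathit{False}$, and free if $o.\mathit{owner}$ is open. Deallocation is not modeled, so allocated objects only reference allocated objects. *)

theory Defs
  imports Main
begin

text \<open>Heaps: the set of allocated objects, the ghost attributes closed, owner, owns,
  and all remaining (ordinary) attributes, named by 'f with values in 'v.\<close>
record ('o, 'f, 'v) heap =
  alloc  :: "'o set"
  closed :: "'o \<Rightarrow> bool"
  owner  :: "'o \<Rightarrow> 'o"
  owns   :: "'o \<Rightarrow> 'o set"
  fld    :: "'o \<Rightarrow> 'f \<Rightarrow> 'v"

text \<open>Elementary steps: allocation of a fresh object with initial attribute values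
  (closed, owner, owns, ordinary attributes), or update of a single attribute.\<close>
datatype ('o, 'f, 'v) action =
    Alloc 'o bool 'o "'o set" "'f \<Rightarrow> 'v"
  | SetClosed 'o bool
  | SetOwner 'o 'o
  | SetOwns 'o "'o set"
  | SetFld 'o 'f 'v

fun apply_action :: "('o, 'f, 'v) heap \<Rightarrow> ('o, 'f, 'v) action \<Rightarrow> ('o, 'f, 'v) heap" where
  "apply_action h (Alloc x c w S f) =
     h\<lparr>alloc := alloc h \<union> {x}, closed := (closed h)(x := c), owner := (owner h)(x := w),
       owns := (owns h)(x := S), fld := (fld h)(x := f)\<rparr>"
| "apply_action h (SetClosed x b) = h\<lparr>closed := (closed h)(x := b)\<rparr>"
| "apply_action h (SetOwner x v) = h\<lparr>owner := (owner h)(x := v)\<rparr>"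
| "apply_action h (SetOwns x S) = h\<lparr>owns := (owns h)(x := S)\<rparr>"
| "apply_action h (SetFld x a v) = h\<lparr>fld := (fld h)(x := (fld h x)(a := v))\<rparr>"

fun target :: "('o, 'f, 'v) action \<Rightarrow> 'o" where
  "target (Alloc x _ _ _ _) = x"
| "target (SetClosed x _) = x"
| "target (SetOwner x _) = x"
| "target (SetOwns x _) = x"
| "target (SetFld x _ _) = x"

definition step :: "('o, 'f, 'v) heap \<Rightarrow> ('o, 'f, 'v) action \<Rightarrow> ('o, 'f, 'v) heap \<Rightarrow> bool" where
  "step h a h' \<longleftrightarrow>
     (case a of Alloc x _ _ _ _ \<Rightarrow> x \<notin> alloc h | _ \<Rightarrow> target a \<in> alloc h)
     \<and> h' = apply_action h a"

text \<open>Standing assumption: allocated objects only reference allocated objects.\<close>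
definition refs_alloc :: "('o, 'f, 'v) heap \<Rightarrow> bool" where
  "refs_alloc h \<longleftrightarrow> (\<forall>x\<in>alloc h. owner h x \<in> alloc h \<and> owns h x \<subseteq> alloc h)"

definition initial_heap :: "'o \<Rightarrow> ('o, 'f, 'v) heap \<Rightarrow> bool" where
  "initial_heap void h \<longleftrightarrow> alloc h = {void} \<and> \<not> closed h void"

definition execution :: "'o \<Rightarrow> ('o, 'f, 'v) heap list \<Rightarrow> ('o, 'f, 'v) action list \<Rightarrow> bool" where
  "execution void hs acts \<longleftrightarrow>
     length hs = Suc (length acts) \<and> initial_heap void (hs ! 0)
     \<and> (\<forall>h\<in>set hs. refs_alloc h)
     \<and> (\<forall>i<length acts. step (hs ! i) (acts ! i) (hs ! Suc i))"

text \<open>Guarantees (a)-(d) of the methodology for a step performed in state h.\<close>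
fun obligations :: "('o, 'f, 'v) heap \<Rightarrow> ('o, 'f, 'v) action \<Rightarrow> bool" where
  "obligations h (Alloc x c w S f) = (\<not> c)"
| "obligations h (SetOwner x v) = (\<not> closed h (owner h x))"
| "obligations h (SetClosed x b) =
     ((\<not> b \<longrightarrow> \<not> closed h (owner h x))
      \<and> (b \<longrightarrow> (\<forall>y\<in>owns h x. closed h y \<and> owner h y = x)))"
| "obligations h (SetOwns x S) = (\<not> closed h x)"
| "obligations h (SetFld x a v) = (\<not> closed h x)"

definition G2 :: "('o, 'f, 'v) heap \<Rightarrow> bool" where
  "G2 h \<longleftrightarrow> (\<forall>y\<in>alloc h. \<forall>p\<in>alloc h.
      closed h p \<and> y \<in> owns h p \<longrightarrow> closed h y \<and> owner h y = p)"

end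

theory Submission
  imports Defs
begin

text \<open>G2 is an inductive invariant: it holds in the initial heap, where Void is the only
  object and is open, and every step allowed by the obligations preserves it. Allocation
  adds an open object that nobody owns yet, and closing x is guarded by (c). Opening x or
  changing its owner requires x to be free, whereas by G2 an object in the owns set of a
  closed p has owner p and is therefore not free. Changing owns or an ordinary attribute
  requires the object to be open, and G2 says nothing about open objects.\<close>

lemma G2I:
  assumes "\<And>y p. y \<in> alloc h \<Longrightarrow> p \<in> alloc h \<Longrightarrow> closed h p \<Longrightarrow> y \<in> owns h p
             \<Longrightarrow> closed h y \<and> owner h y = p"
  shows "G2 h"
  using assms unfolding G2_def by blast

lemma G2D:
  assumes "G2 h" "y \<in> alloc h" "p \<in> alloc h" "closed h p" "y \<in> owns h p"
  shows "closed h y \<and> owner h y = p"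
  using assms unfolding G2_def by blast

lemma G2_initial_heap: "initial_heap void h \<Longrightarrow> G2 h"
  unfolding initial_heap_def G2_def by auto

lemma owned_by_closed_not_free:
  assumes "G2 h" "refs_alloc h" "p \<in> alloc h" "closed h p" "x \<in> owns h p"
  shows "closed h (owner h x)"
proof -
  have "x \<in> alloc h" using assms(2,3,5) unfolding refs_alloc_def by blast
  with G2D[OF assms(1) _ assms(3-5)] have "owner h x = p" by blast
  with \<open>closed h p\<close> show ?thesis by simp
qed

lemma G2_Alloc:
  assumes "G2 h" "refs_alloc h" "x \<notin> alloc h" "\<not> c"
  shows "G2 (apply_action h (Alloc x c w S f))" (is "G2 ?h'")
proof (rule G2I)
  fix y p assume y: "y \<in> alloc ?h'" and p: "p \<in> alloc ?h'"
    and cp: "closed ?h' p" and yp: "y \<in> owns ?h' p"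
  have "p \<noteq> x" using cp \<open>\<not> c\<close> by auto
  then have old: "p \<in> alloc h" "closed h p" "y \<in> owns h p" using p cp yp by auto
  then have "y \<in> alloc h" using \<open>refs_alloc h\<close> unfolding refs_alloc_def by blast
  with \<open>x \<notin> alloc h\<close> have "y \<noteq> x" by blast
  moreover note G2D[OF \<open>G2 h\<close> \<open>y \<in> alloc h\<close> old]
  ultimately show "closed ?h' y \<and> owner ?h' y = p" by simp
qed

lemma G2_SetClosed_True:
  assumes "G2 h" "\<forall>y\<in>owns h x. closed h y \<and> owner h y = x"
  shows "G2 (apply_action h (SetClosed x True))" (is "G2 ?h'")
proof (rule G2I)
  fix y p assume y: "y \<in> alloc ?h'" and p: "p \<in> alloc ?h'"
    and cp: "closed ?h' p" and yp: "y \<in> owns ?h' p"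
  show "closed ?h' y \<and> owner ?h' y = p"
  proof (cases "p = x")
    case True
    with assms(2) yp show ?thesis by simp
  next
    case False
    with y p cp yp have "y \<in> alloc h" "p \<in> alloc h" "closed h p" "y \<in> owns h p" by auto
    from G2D[OF \<open>G2 h\<close> this] show ?thesis by simp
  qed
qed

lemma G2_SetClosed_False:
  assumes "G2 h" "refs_alloc h" "\<not> closed h (owner h x)"
  shows "G2 (apply_action h (SetClosed x False))" (is "G2 ?h'")
proof (rule G2I)
  fix y p assume y: "y \<in> alloc ?h'" and p: "p \<in> alloc ?h'"
    and cp: "closed ?h' p" and yp: "y \<in> owns ?h' p"
  have "p \<noteq> x" using cp by auto
  then have old: "y \<in> alloc h" "p \<in> alloc h" "closed h p" "y \<in> owns h p" using y p cp yp by auto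
  then have "closed h (owner h y)" using assms(1,2) by (intro owned_by_closed_not_free)
  with assms(3) have "y \<noteq> x" by blast
  moreover note G2D[OF \<open>G2 h\<close> old]
  ultimately show "closed ?h' y \<and> owner ?h' y = p" by simp
qed

lemma G2_SetOwner:
  assumes "G2 h" "refs_alloc h" "\<not> closed h (owner h x)"
  shows "G2 (apply_action h (SetOwner x v))" (is "G2 ?h'")
proof (rule G2I)
  fix y p assume "y \<in> alloc ?h'" "p \<in> alloc ?h'" "closed ?h' p" "y \<in> owns ?h' p"
  then have old: "y \<in> alloc h" "p \<in> alloc h" "closed h p" "y \<in> owns h p" by auto
  then have "closed h (owner h y)" using assms(1,2) by (intro owned_by_closed_not_free)
  with assms(3) have "y \<noteq> x" by blast
  moreover note G2D[OF \<open>G2 h\<close> old]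
  ultimately show "closed ?h' y \<and> owner ?h' y = p" by simp
qed

lemma G2_SetOwns:
  assumes "G2 h" "\<not> closed h x"
  shows "G2 (apply_action h (SetOwns x S))" (is "G2 ?h'")
proof (rule G2I)
  fix y p assume y: "y \<in> alloc ?h'" and p: "p \<in> alloc ?h'"
    and cp: "closed ?h' p" and yp: "y \<in> owns ?h' p"
  have "p \<noteq> x" using cp \<open>\<not> closed h x\<close> by auto
  then have "y \<in> alloc h" "p \<in> alloc h" "closed h p" "y \<in> owns h p" using y p cp yp by auto
  from G2D[OF \<open>G2 h\<close> this] show "closed ?h' y \<and> owner ?h' y = p" by simp
qed

lemma G2_SetFld: "G2 (apply_action h (SetFld x a v)) = G2 h"
  unfolding G2_def by simp

lemma G2_step:
  assumes "G2 h" "refs_alloc h" "step h a h'" "obligations h a"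
  shows "G2 h'"
proof -
  have h': "h' = apply_action h a" using assms(3) unfolding step_def by simp
  show ?thesis
  proof (cases a)
    case (Alloc x c w S f)
    then have "x \<notin> alloc h" "\<not> c" using assms(3,4) by (simp_all add: step_def)
    with assms(1,2) show ?thesis unfolding h' Alloc by (rule G2_Alloc)
  next
    case (SetClosed x b)
    show ?thesis
    proof (cases b)
      case True
      with assms(4) SetClosed have "\<forall>y\<in>owns h x. closed h y \<and> owner h y = x" by simp
      then have "G2 (apply_action h (SetClosed x True))" by (rule G2_SetClosed_True[OF assms(1)])
      with h' SetClosed True show ?thesis by simp
    next
      case False
      with assms(4) SetClosed have "\<not> closed h (owner h x)" by simp
      then have "G2 (apply_action h (SetClosed x False))" by (rule G2_SetClosed_False[OF assms(1,2)])
      with h' SetClosed False show ?thesis by simp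
    qed
  next
    case (SetOwner x v)
    with assms(4) have "\<not> closed h (owner h x)" by simp
    with assms(1,2) show ?thesis unfolding h' SetOwner by (rule G2_SetOwner)
  next
    case (SetOwns x S)
    with assms(4) have "\<not> closed h x" by simp
    with assms(1) show ?thesis unfolding h' SetOwns by (rule G2_SetOwns)
  next
    case (SetFld x f v)
    with assms(1) show ?thesis unfolding h' by (simp only: G2_SetFld)
  qed
qed

lemma execution_invariant:
  assumes exec: "execution void hs acts"
    and ok: "\<forall>i<length acts. obligations (hs ! i) (acts ! i)"
    and init: "\<And>h. initial_heap void h \<Longrightarrow> P h"
    and pres: "\<And>h a h'. P h \<Longrightarrow> refs_alloc h \<Longrightarrow> step h a h' \<Longrightarrow> obligations h a \<Longrightarrow> P h'"
  shows "\<forall>h\<in>set hs. P h"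
proof -
  from exec have len: "length hs = Suc (length acts)"
    and ra: "\<forall>h\<in>set hs. refs_alloc h"
    and st: "\<forall>i<length acts. step (hs ! i) (acts ! i) (hs ! Suc i)"
    and ini: "initial_heap void (hs ! 0)"
    unfolding execution_def by auto
  have "P (hs ! i)" if "i \<le> length acts" for i
    using that
  proof (induction i)
    case 0
    from ini show ?case by (rule init)
  next
    case (Suc i)
    then have i: "i < length acts" by simp
    with Suc.IH have "P (hs ! i)" by simp
    moreover from i len ra have "refs_alloc (hs ! i)" by simp
    moreover from i st have "step (hs ! i) (acts ! i) (hs ! Suc i)" by simp
    moreover from i ok have "obligations (hs ! i) (acts ! i)" by simp
    ultimately show ?case by (rule pres)
  qed
  then show ?thesis using len by (metis in_set_conv_nth less_Suc_eq_le)
qed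

theorem lemma1:
  fixes void :: 'o
    and hs :: "('o, 'f, 'v) heap list"
    and acts :: "('o, 'f, 'v) action list"
  assumes "execution void hs acts"
    and "\<forall>i<length acts. obligations (hs ! i) (acts ! i)"
  shows "\<forall>h\<in>set hs. G2 h"
  using assms G2_initial_heap G2_step by (rule execution_invariant)

end
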